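(* Let $\beta\in(-1,1)$ and $\varphi\in[0,1)$. Let $X_0$ be a random variable with values on the unit circle $\partial B(0,1)\subset\mathbb{C}$, and for $n\ge1$ let $$X_n=\frac{X_{n-1}+\beta}{\beta X_{n-1}+1}\,\epsilon_n,$$ where $(\epsilon_n)_{n\ge1}$ are i.i.d., independent of $X_0$, with the wrapped Cauchy density $f_\varphi(z)=\frac{1}{2\pi}\frac{1-\varphi^2}{|z-\varphi|^2}$, $z\in\partial B(0,1)$, with respect to the arc length measure $\nu$ on $\partial B(0,1)$. Then this Markov chain admits a unique invariant distribution $\mu$. Moreover there exists $\epsilon_0>0$ such that $v:=\inf_{u\in\partial B(0,1)}\inf_{0<\epsilon<\epsilon_0}\epsilon^{-1}\nu(\partial B(0,1)\cap B(u,\epsilon))$ is a finite positive constant, and, if $X_0$ is distributed as $\mu$, then for any $\alpha\in(0,1)$, any sufficiently small $\epsilon>0$ and any $$n\ge\frac{2}{\kappa v\epsilon}\Big(\ln\frac1\alpha+\ln\frac{4}{\epsilon\kappa v}\Big),\qquad \kappa=\frac{1}{2\pi}\frac{1-\varphi}{1+\varphi},$$ one has $d_H(\{X_1,\ldots,X_n\},\partial B(0,1))\le\epsilon$ with probability at least $1-\alpha$.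
   Context: $B(u,\epsilon)$ is the closed Euclidean ball in $\mathbb{C}\cong\mathbb{R}^2$. $d_H$ is the Hausdorff distance $d_H(A,B)=\max(\sup_{x\in A}\inf_{y\in B}|x-y|,\sup_{x\in B}\inf_{y\in A}|x-y|)$. *)

theory Defs
  imports "HOL-Probability.Probability"
begin

definition arc_measure :: "complex measure" where
  "arc_measure = distr (restrict_space lborel {0..<2*pi}) borel (\<lambda>t. cis t)"

definition wc_density :: "real \<Rightarrow> complex \<Rightarrow> real" where
  "wc_density \<phi> z = (1 - \<phi>\<^sup>2) / (2 * pi * (cmod (z - complex_of_real \<phi>))\<^sup>2)"

definition wrapped_cauchy :: "real \<Rightarrow> complex measure" where
  "wrapped_cauchy \<phi> = density arc_measure (\<lambda>z. ennreal (wc_density \<phi> z))"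

definition mob :: "real \<Rightarrow> complex \<Rightarrow> complex" where
  "mob \<beta> x = (x + complex_of_real \<beta>) / (complex_of_real \<beta> * x + 1)"

definition trans_kernel :: "real \<Rightarrow> real \<Rightarrow> complex \<Rightarrow> complex measure" where
  "trans_kernel \<beta> \<phi> x = distr (wrapped_cauchy \<phi>) borel (\<lambda>e. mob \<beta> x * e)"

definition invariant_distr :: "real \<Rightarrow> real \<Rightarrow> complex measure \<Rightarrow> bool" where
  "invariant_distr \<beta> \<phi> \<mu> \<longleftrightarrow>
     prob_space \<mu> \<and> sets \<mu> = sets borel \<and> emeasure \<mu> (sphere 0 1) = 1 \<and>
     (\<forall>A\<in>sets borel. emeasure \<mu> A = (\<integral>\<^sup>+ x. emeasure (trans_kernel \<beta> \<phi> x) A \<partial>\<mu>))"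

primrec chain :: "real \<Rightarrow> ('a \<Rightarrow> complex) \<Rightarrow> (nat \<Rightarrow> 'a \<Rightarrow> complex) \<Rightarrow> nat \<Rightarrow> 'a \<Rightarrow> complex" where
  "chain \<beta> X0 eps 0 \<omega> = X0 \<omega>"
| "chain \<beta> X0 eps (Suc n) \<omega> = mob \<beta> (chain \<beta> X0 eps n \<omega>) * eps (Suc n) \<omega>"

definition haus_dist :: "complex set \<Rightarrow> complex set \<Rightarrow> real" where
  "haus_dist A B = max (SUP x\<in>A. INF y\<in>B. dist x y) (SUP x\<in>B. INF y\<in>A. dist x y)"

definition v_const :: "real \<Rightarrow> ereal" where
  "v_const \<epsilon>0 = (INF u\<in>sphere 0 1. INF e\<in>{0<..<\<epsilon>0}.
       ereal (measure arc_measure (sphere 0 1 \<inter> cball u e) / e))"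

end

theory Submission
  imports Defs
begin

(*
  From a point x of the circle the chain moves to mob x * eps with eps wrapped Cauchy, so by
  rotation invariance of arc length its law has density z \<mapsto> f(z conj(mob x)), where f is the
  wrapped Cauchy density.  Since f \<ge> kappa on the circle, this density splits as kappa + r(x,z)
  with \<integral> r(x,z) dz = 1 - 2 pi kappa (Doeblin's condition).  A probability density g is then
  invariant iff g = kappa + R g, where (R g)(z) = \<integral> g(x) r(x,z) dx.  As R multiplies mass by
  1 - 2 pi kappa < 1, the series \<Sum>j R^j kappa is a probability density solving this equation,
  and it is the least nonnegative solution; every invariant law has a density solving it, hence
  dominates, and so equals, the stationary one.

  For the covering bound cut the circle into K = \<lceil>2 pi / eps\<rceil> arcs of length
  h = 2 pi / K \<le> eps.  By independence of the noise and Doeblin's condition each step misses a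
  fixed arc with probability at most 1 - kappa h, whatever the past, so X_1, ..., X_n miss it with
  probability at most (1 - kappa h)^n.  If every arc is visited the Hausdorff distance is at most
  eps; a union bound and (1 - kappa h)^n \<le> exp (- kappa h n) give the stated number of steps.
  This holds for any initial law on the circle, the stationary one included.
*)

section \<open>The unit circle and arc length\<close>

lemma unit_circle_eq_cis:
  assumes "cmod w = 1"
  obtains s where "0 \<le> s" "s < 2*pi" "w = cis s"
  using assms Arg2pi_ge_0 Arg2pi_lt_2pi complex_norm_eq_1_exp cis_conv_exp by metis

lemma norm_cis_diff_le: "cmod (cis t - cis s) \<le> \<bar>t - s\<bar>"
proof -
  have "(cmod (cis t - cis s))\<^sup>2 = (cos t - cos s)\<^sup>2 + (sin t - sin s)\<^sup>2"
    by (simp add: cmod_power2)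
  also have "\<dots> = 2 - 2 * cos (t - s)"
    by (simp add: cos_diff power2_eq_square algebra_simps)
  also have "\<dots> = (2 * sin ((t - s) / 2))\<^sup>2"
    using cos_double_sin[of "(t - s) / 2", unfolded mult_2 field_sum_of_halves] by (simp add: power_mult_distrib)
  also have "\<dots> \<le> (t - s)\<^sup>2"
  proof -
    have "\<bar>2 * sin ((t - s) / 2)\<bar> \<le> \<bar>t - s\<bar>"
      using abs_sin_x_le_abs_x[of "(t - s) / 2"] by simp
    then show ?thesis
      by (metis abs_ge_zero power2_abs power_mono)
  qed
  finally show ?thesis
    by (metis abs_ge_zero power2_abs power2_le_imp_le)
qed

lemma sets_arc_measure [simp, measurable_cong]: "sets arc_measure = sets borel"
  by (simp add: arc_measure_def)

lemma space_arc_measure [simp]: "space arc_measure = UNIV"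
  using sets_eq_imp_space_eq[OF sets_arc_measure] by simp

lemma cis_borel_measurable [measurable]: "cis \<in> borel_measurable borel"
  by (intro borel_measurable_continuous_onI continuous_intros)

lemma nn_integral_arc_measure:
  assumes [measurable]: "h \<in> borel_measurable borel"
  shows "(\<integral>\<^sup>+ z. h z \<partial>arc_measure) = (\<integral>\<^sup>+ t. h (cis t) * indicator {0..<2*pi} t \<partial>lborel)"
  unfolding arc_measure_def
  by (subst nn_integral_distr)
     (auto intro!: measurable_restrict_space1 nn_integral_cong
           simp: nn_integral_restrict_space nn_integral_set_ennreal mult.commute
           split: split_indicator)

lemma emeasure_arc_measure:
  assumes [measurable]: "A \<in> sets borel"
  shows "emeasure arc_measure A = (\<integral>\<^sup>+ t. indicator A (cis t) * indicator {0..<2*pi} t \<partial>lborel)"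
  using nn_integral_arc_measure[of "indicator A"] by simp

lemma emeasure_arc_measure_UNIV: "emeasure arc_measure UNIV = 2 * pi"
  by (simp add: emeasure_arc_measure)

lemma AE_arc_measure_sphere: "AE z in arc_measure. z \<in> sphere 0 1"
  by (rule AE_I[where N = "- sphere 0 1"]) (auto simp: emeasure_arc_measure)

interpretation arc_measure: finite_measure arc_measure
  by (rule finite_measureI) (simp add: emeasure_arc_measure_UNIV)

lemma pair_sigma_finite_arc_measure: "pair_sigma_finite arc_measure arc_measure"
  by (simp add: pair_sigma_finite_def arc_measure.sigma_finite_measure_axioms)

lemma cis_image_interval_sets [measurable]: "cis ` {a..b} \<in> sets borel"
  by (intro borel_closed compact_imp_closed compact_continuous_image continuous_intros) auto

lemma measure_arc_measure_cis_interval: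
  assumes "0 \<le> a" "a \<le> b" "b \<le> 2*pi"
  shows "b - a \<le> measure arc_measure (cis ` {a..b})"
proof -
  have "ennreal (b - a) = (\<integral>\<^sup>+ t. indicator {a..<b} t \<partial>lborel)"
    using assms by simp
  also have "\<dots> \<le> (\<integral>\<^sup>+ t. indicator (cis ` {a..b}) (cis t) * indicator {0..<2*pi} t \<partial>lborel)"
    using assms by (intro nn_integral_mono) (auto split: split_indicator)
  finally show ?thesis
    using assms by (simp add: emeasure_arc_measure[symmetric] arc_measure.emeasure_eq_measure)
qed

lemma measure_arc_measure_UNIV: "measure arc_measure UNIV = 2 * pi"
  using emeasure_arc_measure_UNIV by (simp add: arc_measure.emeasure_eq_measure)

lemma nn_integral_periodic_shift:
  fixes g :: "real \<Rightarrow> ennreal"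
  assumes [measurable]: "g \<in> borel_measurable borel" and periodic: "\<And>t. g (t + 2*pi) = g t"
    and s: "0 \<le> s" "s \<le> 2*pi"
  shows "(\<integral>\<^sup>+ t. g (t + s) * indicator {0..<2*pi} t \<partial>lborel)
       = (\<integral>\<^sup>+ t. g t * indicator {0..<2*pi} t \<partial>lborel)"
proof -
  have translate: "(\<integral>\<^sup>+ t. g t * indicator {c..<d} t \<partial>lborel)
      = (\<integral>\<^sup>+ t. g (t + c) * indicator {0..<d - c} t \<partial>lborel)" for c d
    using nn_integral_real_affine[of "\<lambda>t. g t * indicator {c..<d} t" 1 c]
    by (auto intro!: nn_integral_cong simp: add.commute split: split_indicator)
  have split: "(\<integral>\<^sup>+ t. g t * indicator {a..<c} t \<partial>lborel)
      = (\<integral>\<^sup>+ t. g t * indicator {a..<b} t \<partial>lborel) + (\<integral>\<^sup>+ t. g t * indicator {b..<c} t \<partial>lborel)"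
    if "a \<le> b" "b \<le> c" for a b c
    using that by (subst nn_integral_add[symmetric]) (auto intro!: nn_integral_cong split: split_indicator)
  have wrap: "(\<integral>\<^sup>+ t. g t * indicator {2*pi..<2*pi + s} t \<partial>lborel)
      = (\<integral>\<^sup>+ t. g t * indicator {0..<s} t \<partial>lborel)"
    using translate[of "2*pi"] periodic by simp
  have "(\<integral>\<^sup>+ t. g (t + s) * indicator {0..<2*pi} t \<partial>lborel)
      = (\<integral>\<^sup>+ t. g t * indicator {s..<2*pi + s} t \<partial>lborel)"
    using translate[of s] by simp
  also have "\<dots> = (\<integral>\<^sup>+ t. g t * indicator {0..<2*pi} t \<partial>lborel)"
    using s split[of s "2*pi" "2*pi + s"] split[of 0 s "2*pi"] wrap by (simp add: add.commute)
  finally show ?thesis .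
qed

lemma nn_integral_arc_measure_rotate:
  assumes [measurable]: "h \<in> borel_measurable borel" and "cmod w = 1"
  shows "(\<integral>\<^sup>+ z. h (w * z) \<partial>arc_measure) = (\<integral>\<^sup>+ z. h z \<partial>arc_measure)"
proof -
  obtain s where s: "0 \<le> s" "s < 2*pi" "w = cis s"
    using unit_circle_eq_cis[OF \<open>cmod w = 1\<close>] .
  have "(\<integral>\<^sup>+ z. h (w * z) \<partial>arc_measure) = (\<integral>\<^sup>+ t. h (cis (t + s)) * indicator {0..<2*pi} t \<partial>lborel)"
    by (simp add: nn_integral_arc_measure s cis_mult add.commute)
  also have "\<dots> = (\<integral>\<^sup>+ t. h (cis t) * indicator {0..<2*pi} t \<partial>lborel)"
  proof (rule nn_integral_periodic_shift[where g = "\<lambda>t. h (cis t)"])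
    show "h (cis (t + 2*pi)) = h (cis t)" for t
      by (simp add: cis.ctr)
  qed (use s in auto)
  finally show ?thesis
    by (simp add: nn_integral_arc_measure)
qed

lemma measure_arc_measure_cap_ge:
  assumes u: "u \<in> sphere 0 1" and e: "0 < e"
  shows "min e pi \<le> measure arc_measure (sphere 0 1 \<inter> cball u e)"
proof -
  obtain s where s: "0 \<le> s" "s < 2 * pi" "u = cis s"
    using unit_circle_eq_cis[of u] u by auto
  define m where "m = min e pi"
  have m: "0 < m" "m \<le> e" "m \<le> pi"
    using e by (auto simp: m_def)
  obtain a where a: "0 \<le> a" "a + m \<le> 2 * pi" "\<And>t. t \<in> {a..a + m} \<Longrightarrow> \<bar>t - s\<bar> \<le> m"
  proof (cases "s \<le> pi")
    case True
    then show ?thesis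
      using s m by (intro that[of s]) auto
  next
    case False
    then show ?thesis
      using s m by (intro that[of "s - m"]) auto
  qed
  have "cis ` {a..a + m} \<subseteq> sphere 0 1 \<inter> cball u e"
  proof
    fix x assume "x \<in> cis ` {a..a + m}"
    then obtain t where t: "t \<in> {a..a + m}" "x = cis t"
      by auto
    have "dist u x \<le> \<bar>s - t\<bar>"
      using norm_cis_diff_le[of s t] by (simp add: s t dist_norm)
    also have "\<dots> \<le> e"
      using a(3)[OF t(1)] m by (simp add: abs_minus_commute)
    finally show "x \<in> sphere 0 1 \<inter> cball u e"
      using t by auto
  qed
  then have "measure arc_measure (cis ` {a..a + m}) \<le> measure arc_measure (sphere 0 1 \<inter> cball u e)"
    by (intro arc_measure.finite_measure_mono) auto
  moreover have "a + m - a \<le> measure arc_measure (cis ` {a..a + m})"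
    using a m by (intro measure_arc_measure_cis_interval) auto
  ultimately show ?thesis
    by (simp add: m_def)
qed

section \<open>The Moebius map and the wrapped Cauchy density\<close>

lemma mob_borel_measurable [measurable]: "mob \<beta> \<in> borel_measurable borel"
  unfolding mob_def by measurable

lemma wc_density_borel_measurable [measurable]: "wc_density \<phi> \<in> borel_measurable borel"
  unfolding wc_density_def by measurable

lemma cnj_borel_measurable [measurable]: "cnj \<in> borel_measurable borel"
  by (intro borel_measurable_continuous_onI continuous_intros)

lemma sets_wrapped_cauchy [simp, measurable_cong]: "sets (wrapped_cauchy \<phi>) = sets borel"
  by (simp add: wrapped_cauchy_def)

lemma space_wrapped_cauchy [simp]: "space (wrapped_cauchy \<phi>) = UNIV"
  by (simp add: wrapped_cauchy_def)

lemma sets_trans_kernel [simp, measurable_cong]: "sets (trans_kernel \<beta> \<phi> x) = sets borel"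
  by (simp add: trans_kernel_def)

lemma norm_mob:
  assumes "\<bar>\<beta>\<bar> < 1" "cmod x = 1"
  shows "cmod (mob \<beta> x) = 1"
proof -
  have "complex_of_real \<beta> * x + 1 \<noteq> 0"
  proof
    assume "complex_of_real \<beta> * x + 1 = 0"
    then have "complex_of_real \<beta> * x = -1"
      by (simp add: eq_neg_iff_add_eq_0)
    then have "cmod (complex_of_real \<beta> * x) = 1"
      by simp
    with assms show False
      by (simp add: norm_mult)
  qed
  moreover have "(cmod (x + complex_of_real \<beta>))\<^sup>2 = (cmod (complex_of_real \<beta> * x + 1))\<^sup>2"
  proof -
    have x: "(Re x)\<^sup>2 + (Im x)\<^sup>2 = 1"
      using assms by (simp add: cmod_def)
    have "(cmod (x + complex_of_real \<beta>))\<^sup>2 = ((Re x)\<^sup>2 + (Im x)\<^sup>2) + 2 * \<beta> * Re x + \<beta>\<^sup>2"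
      unfolding cmod_power2 by (simp add: power2_eq_square algebra_simps)
    moreover have "(cmod (complex_of_real \<beta> * x + 1))\<^sup>2 = \<beta>\<^sup>2 * ((Re x)\<^sup>2 + (Im x)\<^sup>2) + 2 * \<beta> * Re x + 1"
      unfolding cmod_power2 by (simp add: power2_eq_square algebra_simps)
    ultimately show ?thesis
      unfolding x by simp
  qed
  ultimately show ?thesis
    by (simp add: mob_def norm_divide power2_eq_iff_nonneg)
qed

lemma wc_density_ge:
  assumes "0 \<le> \<phi>" "\<phi> < 1" "cmod w = 1"
  shows "1 / (2 * pi) * ((1 - \<phi>) / (1 + \<phi>)) \<le> wc_density \<phi> w"
proof -
  have "0 < cmod (w - complex_of_real \<phi>)"
    using assms by auto
  moreover have "cmod (w - complex_of_real \<phi>) \<le> 1 + \<phi>"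
    using norm_triangle_ineq4[of w "complex_of_real \<phi>"] assms by simp
  ultimately have "(cmod (w - complex_of_real \<phi>))\<^sup>2 \<le> (1 + \<phi>)\<^sup>2"
    by (intro power_mono) auto
  have "(1 - \<phi>\<^sup>2) / (2 * pi * (1 + \<phi>)\<^sup>2) = ((1 - \<phi>) * (1 + \<phi>)) / ((2 * pi * (1 + \<phi>)) * (1 + \<phi>))"
    by (simp add: power2_eq_square algebra_simps)
  also have "\<dots> = 1 / (2 * pi) * ((1 - \<phi>) / (1 + \<phi>))"
    using assms by (subst mult_divide_mult_cancel_right) auto
  finally have "1 / (2 * pi) * ((1 - \<phi>) / (1 + \<phi>)) = (1 - \<phi>\<^sup>2) / (2 * pi * (1 + \<phi>)\<^sup>2)" ..
  also have "\<dots> \<le> (1 - \<phi>\<^sup>2) / (2 * pi * (cmod (w - complex_of_real \<phi>))\<^sup>2)"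
    using assms \<open>0 < cmod (w - complex_of_real \<phi>)\<close> \<open>(cmod (w - complex_of_real \<phi>))\<^sup>2 \<le> (1 + \<phi>)\<^sup>2\<close>
    by (intro divide_left_mono mult_left_mono mult_pos_pos) (auto simp: abs_square_le_1)
  finally show ?thesis
    by (simp add: wc_density_def)
qed

section \<open>Doeblin decomposition of the transition kernel\<close>

locale wrapped_cauchy_moebius =
  fixes \<beta> \<phi> :: real
  assumes beta: "\<bar>\<beta>\<bar> < 1" and phi: "0 \<le> \<phi>" "\<phi> < 1"
    and prob_space_wrapped_cauchy: "prob_space (wrapped_cauchy \<phi>)"
begin

definition kappa :: real where
  "kappa = 1 / (2 * pi) * ((1 - \<phi>) / (1 + \<phi>))"

definition transition_density :: "complex \<Rightarrow> complex \<Rightarrow> ennreal" where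
  "transition_density x z = ennreal (wc_density \<phi> (z * cnj (mob \<beta> x)))"

(* ennreal subtraction truncates at 0; on the circle transition_density \<ge> kappa, so it is exact there. *)
definition residual_density :: "complex \<Rightarrow> complex \<Rightarrow> ennreal" where
  "residual_density x z = transition_density x z - ennreal kappa"

lemma kappa_pos: "0 < kappa"
  using phi by (simp add: kappa_def)

lemma two_pi_kappa_le_1: "2 * pi * kappa \<le> 1"
  using phi by (simp add: kappa_def)

lemma transition_density_measurable [measurable]:
  "(\<lambda>(x, z). transition_density x z) \<in> borel_measurable (borel \<Otimes>\<^sub>M borel)"
  unfolding transition_density_def by measurable

lemma residual_density_measurable [measurable]:
  "(\<lambda>(x, z). residual_density x z) \<in> borel_measurable (borel \<Otimes>\<^sub>M borel)"
  unfolding residual_density_def by measurable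

lemma norm_mob_sphere: "x \<in> sphere 0 1 \<Longrightarrow> cmod (mob \<beta> x) = 1"
  using norm_mob[OF beta] by simp

lemma emeasure_trans_kernel:
  assumes x: "x \<in> sphere 0 1" and [measurable]: "A \<in> sets borel"
  shows "emeasure (trans_kernel \<beta> \<phi> x) A = (\<integral>\<^sup>+ z. transition_density x z * indicator A z \<partial>arc_measure)"
proof -
  define m where "m = mob \<beta> x"
  have m: "cmod m = 1"
    using norm_mob_sphere[OF x] by (simp add: m_def)
  then have cancel: "m * e * cnj m = e" for e
    by (metis complex_norm_square mult.commute mult.left_commute mult_1 of_real_1 power_one)
  have [measurable]: "(\<lambda>e. m * e) -` A \<in> sets borel"
    using measurable_sets[of "\<lambda>e. m * e" borel borel A] by simp
  have "emeasure (trans_kernel \<beta> \<phi> x) A = emeasure (wrapped_cauchy \<phi>) ((\<lambda>e. m * e) -` A)"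
    unfolding trans_kernel_def m_def by (subst emeasure_distr) auto
  also have "\<dots> = (\<integral>\<^sup>+ e. ennreal (wc_density \<phi> e) * indicator A (m * e) \<partial>arc_measure)"
    unfolding wrapped_cauchy_def
    by (subst emeasure_density) (auto intro!: nn_integral_cong split: split_indicator)
  also have "\<dots> = (\<integral>\<^sup>+ e. ennreal (wc_density \<phi> (m * e * cnj m)) * indicator A (m * e) \<partial>arc_measure)"
    by (simp add: cancel)
  also have "\<dots> = (\<integral>\<^sup>+ z. ennreal (wc_density \<phi> (z * cnj m)) * indicator A z \<partial>arc_measure)"
    using nn_integral_arc_measure_rotate[OF _ m,
        of "\<lambda>z. ennreal (wc_density \<phi> (z * cnj m)) * indicator A z"] by simp
  finally show ?thesis
    by (simp add: transition_density_def m_def)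
qed

lemma prob_space_trans_kernel: "prob_space (trans_kernel \<beta> \<phi> x)"
  unfolding trans_kernel_def
  by (rule prob_space.prob_space_distr[OF prob_space_wrapped_cauchy]) measurable

lemma transition_density_ge:
  assumes "x \<in> sphere 0 1" "z \<in> sphere 0 1"
  shows "ennreal kappa \<le> transition_density x z"
  unfolding transition_density_def kappa_def
  using assms phi by (intro ennreal_leI wc_density_ge) (auto simp: norm_mult norm_mob_sphere)

lemma transition_density_split:
  assumes "x \<in> sphere 0 1" "z \<in> sphere 0 1"
  shows "transition_density x z = ennreal kappa + residual_density x z"
  unfolding residual_density_def
  using add_diff_inverse_ennreal[OF transition_density_ge[OF assms]] by (rule sym)

lemma emeasure_trans_kernel_ge:
  assumes x: "x \<in> sphere 0 1" and [measurable]: "A \<in> sets borel" and "A \<subseteq> sphere 0 1"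
  shows "ennreal kappa * emeasure arc_measure A \<le> emeasure (trans_kernel \<beta> \<phi> x) A"
  unfolding emeasure_trans_kernel[OF assms(1,2)]
  using assms transition_density_ge[OF x]
  by (auto simp flip: nn_integral_cmult_indicator intro!: nn_integral_mono split: split_indicator)

lemma nn_integral_transition_density:
  assumes "x \<in> sphere 0 1"
  shows "(\<integral>\<^sup>+ z. transition_density x z \<partial>arc_measure) = 1"
  using emeasure_trans_kernel[OF assms, of UNIV] prob_space.emeasure_space_1[OF prob_space_trans_kernel]
  by (simp add: trans_kernel_def)

lemma nn_integral_residual_density:
  assumes x: "x \<in> sphere 0 1"
  shows "(\<integral>\<^sup>+ z. residual_density x z \<partial>arc_measure) = ennreal (1 - 2 * pi * kappa)"
proof -
  have "1 = (\<integral>\<^sup>+ z. ennreal kappa + residual_density x z \<partial>arc_measure)"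
    unfolding nn_integral_transition_density[OF x, symmetric]
    using AE_arc_measure_sphere
    by (intro nn_integral_cong_AE) (auto elim!: eventually_mono simp: transition_density_split[OF x])
  also have "\<dots> = ennreal (2 * pi * kappa) + (\<integral>\<^sup>+ z. residual_density x z \<partial>arc_measure)"
    using kappa_pos
    by (subst nn_integral_add) (auto simp: emeasure_arc_measure_UNIV ennreal_mult' mult.commute)
  finally have "(\<integral>\<^sup>+ z. residual_density x z \<partial>arc_measure) = ennreal 1 - ennreal (2 * pi * kappa)"
    by (metis ennreal_1 ennreal_add_diff_cancel_left ennreal_neq_top)
  then show ?thesis
    using kappa_pos by (subst (asm) ennreal_minus) auto
qed

lemma emeasure_trans_kernel_compl_le:
  assumes x: "x \<in> sphere 0 1" and [measurable]: "J \<in> sets borel" and "J \<subseteq> sphere 0 1"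
    and h: "h \<le> measure arc_measure J"
  shows "emeasure (trans_kernel \<beta> \<phi> x) (- J) \<le> ennreal (1 - kappa * h)"
proof -
  interpret K: prob_space "trans_kernel \<beta> \<phi> x"
    by (rule prob_space_trans_kernel)
  have "ennreal (kappa * h) \<le> ennreal kappa * emeasure arc_measure J"
    using kappa_pos h by (simp add: arc_measure.emeasure_eq_measure ennreal_mult[symmetric])
  also have "\<dots> \<le> emeasure (trans_kernel \<beta> \<phi> x) J"
    using assms by (intro emeasure_trans_kernel_ge)
  finally have "kappa * h \<le> measure (trans_kernel \<beta> \<phi> x) J"
    using measure_nonneg[of "trans_kernel \<beta> \<phi> x" J] by (auto simp: K.emeasure_eq_measure ennreal_le_iff2)
  moreover have "measure (trans_kernel \<beta> \<phi> x) (- J) = 1 - measure (trans_kernel \<beta> \<phi> x) J"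
    using K.prob_compl[of J] by (simp add: Compl_eq_Diff_UNIV trans_kernel_def)
  ultimately show ?thesis
    by (auto simp: K.emeasure_eq_measure intro!: ennreal_leI)
qed

lemma emeasure_trans_kernel_eq_nn_integral:
  assumes [measurable]: "A \<in> sets borel"
  shows "emeasure (trans_kernel \<beta> \<phi> x) A = (\<integral>\<^sup>+ w. indicator A (mob \<beta> x * w) \<partial>wrapped_cauchy \<phi>)"
proof -
  have "emeasure (trans_kernel \<beta> \<phi> x) A = (\<integral>\<^sup>+ z. indicator A z \<partial>trans_kernel \<beta> \<phi> x)"
    by (rule nn_integral_indicator[symmetric]) simp
  also have "\<dots> = (\<integral>\<^sup>+ w. indicator A (mob \<beta> x * w) \<partial>wrapped_cauchy \<phi>)"
    unfolding trans_kernel_def by (rule nn_integral_distr) measurable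
  finally show ?thesis .
qed

end

section \<open>The stationary density\<close>

context wrapped_cauchy_moebius
begin

definition residual_op :: "(complex \<Rightarrow> ennreal) \<Rightarrow> complex \<Rightarrow> ennreal" where
  "residual_op g z = (\<integral>\<^sup>+ x. g x * residual_density x z \<partial>arc_measure)"

definition stationary_density :: "complex \<Rightarrow> ennreal" where
  "stationary_density z = (\<Sum>j. (residual_op ^^ j) (\<lambda>_. ennreal kappa) z)"

lemma residual_op_measurable [measurable]:
  assumes [measurable]: "g \<in> borel_measurable borel"
  shows "residual_op g \<in> borel_measurable borel"
  unfolding residual_op_def by (rule arc_measure.borel_measurable_nn_integral) measurable

lemma residual_op_power_measurable [measurable]:
  "(residual_op ^^ j) (\<lambda>_. ennreal kappa) \<in> borel_measurable borel"
  by (induction j) simp_all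

lemma stationary_density_measurable [measurable]: "stationary_density \<in> borel_measurable borel"
  unfolding stationary_density_def by measurable

lemma residual_op_mono:
  assumes "\<And>x. x \<in> sphere 0 1 \<Longrightarrow> a x \<le> b x"
  shows "residual_op a z \<le> residual_op b z"
  unfolding residual_op_def using AE_arc_measure_sphere
  by (intro nn_integral_mono_AE) (auto elim!: eventually_mono intro!: mult_right_mono assms)

lemma residual_op_sum:
  assumes [measurable]: "\<And>j. a j \<in> borel_measurable borel"
  shows "residual_op (\<lambda>x. \<Sum>j\<in>J. a j x) z = (\<Sum>j\<in>J. residual_op (a j) z)"
  unfolding residual_op_def sum_distrib_right by (rule nn_integral_sum) measurable

lemma residual_op_suminf:
  assumes [measurable]: "\<And>j. a j \<in> borel_measurable borel"
  shows "residual_op (\<lambda>x. \<Sum>j. a j x) z = (\<Sum>j. residual_op (a j) z)"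
  unfolding residual_op_def ennreal_suminf_multc[symmetric] by (rule nn_integral_suminf) measurable

lemma nn_integral_residual_op:
  assumes [measurable]: "g \<in> borel_measurable borel"
  shows "(\<integral>\<^sup>+ z. residual_op g z \<partial>arc_measure)
       = ennreal (1 - 2 * pi * kappa) * (\<integral>\<^sup>+ x. g x \<partial>arc_measure)"
proof -
  have "(\<integral>\<^sup>+ z. residual_op g z \<partial>arc_measure)
      = (\<integral>\<^sup>+ x. g x * (\<integral>\<^sup>+ z. residual_density x z \<partial>arc_measure) \<partial>arc_measure)"
    unfolding residual_op_def
    by (subst pair_sigma_finite.Fubini'[OF pair_sigma_finite_arc_measure])
       (auto intro!: nn_integral_cong simp: nn_integral_cmult)
  also have "\<dots> = (\<integral>\<^sup>+ x. ennreal (1 - 2 * pi * kappa) * g x \<partial>arc_measure)"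
    using AE_arc_measure_sphere
    by (intro nn_integral_cong_AE) (auto elim!: eventually_mono simp: nn_integral_residual_density mult.commute)
  finally show ?thesis
    by (simp add: nn_integral_cmult)
qed

lemma nn_integral_residual_op_power:
  "(\<integral>\<^sup>+ z. (residual_op ^^ j) (\<lambda>_. ennreal kappa) z \<partial>arc_measure)
     = ennreal (2 * pi * kappa * (1 - 2 * pi * kappa) ^ j)"
proof (induction j)
  case 0
  show ?case
    using kappa_pos by (simp add: emeasure_arc_measure_UNIV ennreal_mult' mult.commute)
next
  case (Suc j)
  then show ?case
    using kappa_pos two_pi_kappa_le_1
    by (simp add: nn_integral_residual_op ennreal_mult'[symmetric] mult_ac)
qed

lemma nn_integral_stationary_density: "(\<integral>\<^sup>+ z. stationary_density z \<partial>arc_measure) = 1"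
proof -
  define c where "c = 2 * pi * kappa"
  have c: "0 < c" "c \<le> 1"
    using kappa_pos two_pi_kappa_le_1 by (auto simp: c_def)
  then have geometric: "(\<lambda>j. c * (1 - c) ^ j) sums (c * (1 / (1 - (1 - c))))"
    by (intro sums_mult geometric_sums) auto
  have "(\<integral>\<^sup>+ z. stationary_density z \<partial>arc_measure) = (\<Sum>j. ennreal (c * (1 - c) ^ j))"
    unfolding stationary_density_def c_def
    by (subst nn_integral_suminf) (auto simp: nn_integral_residual_op_power)
  also have "\<dots> = ennreal (\<Sum>j. c * (1 - c) ^ j)"
    using c geometric by (intro suminf_ennreal2) (auto simp: sums_summable)
  also have "\<dots> = 1"
    using c geometric by (simp add: sums_iff)
  finally show ?thesis .
qed

lemma nn_integral_transition_density_split: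
  assumes [measurable]: "g \<in> borel_measurable borel" and z: "z \<in> sphere 0 1"
  shows "(\<integral>\<^sup>+ x. g x * transition_density x z \<partial>arc_measure)
       = ennreal kappa * (\<integral>\<^sup>+ x. g x \<partial>arc_measure) + residual_op g z"
proof -
  have "(\<integral>\<^sup>+ x. g x * transition_density x z \<partial>arc_measure)
      = (\<integral>\<^sup>+ x. ennreal kappa * g x + g x * residual_density x z \<partial>arc_measure)"
    using AE_arc_measure_sphere
    by (intro nn_integral_cong_AE)
       (auto elim!: eventually_mono simp: transition_density_split[OF _ z] distrib_left mult.commute)
  then show ?thesis
    unfolding residual_op_def by (simp add: nn_integral_add nn_integral_cmult)
qed

lemma stationary_density_fixpoint:
  assumes z: "z \<in> sphere 0 1"
  shows "(\<integral>\<^sup>+ x. stationary_density x * transition_density x z \<partial>arc_measure) = stationary_density z"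
proof -
  have "residual_op stationary_density z = (\<Sum>j. (residual_op ^^ (j + 1)) (\<lambda>_. ennreal kappa) z)"
    unfolding stationary_density_def by (subst residual_op_suminf) auto
  then show ?thesis
    unfolding nn_integral_transition_density_split[OF stationary_density_measurable z]
    using suminf_offset[of "\<lambda>j. (residual_op ^^ j) (\<lambda>_. ennreal kappa) z" 1]
    by (simp add: nn_integral_stationary_density stationary_density_def add.commute)
qed

(* The partial sums of the series are the iterates of g \<mapsto> kappa + residual_op g starting from 0,
   so by monotonicity of residual_op they stay below every solution. *)
lemma stationary_density_le_solution:
  assumes [measurable]: "g \<in> borel_measurable borel"
    and fixpoint: "\<And>z. z \<in> sphere 0 1 \<Longrightarrow> g z = ennreal kappa + residual_op g z"
    and z: "z \<in> sphere 0 1"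
  shows "stationary_density z \<le> g z"
proof -
  have partial_sums: "(\<Sum>j<N. (residual_op ^^ j) (\<lambda>_. ennreal kappa) z) \<le> g z"
    if "z \<in> sphere 0 1" for N z
    using that
  proof (induction N arbitrary: z)
    case (Suc N)
    have "(\<Sum>j<Suc N. (residual_op ^^ j) (\<lambda>_. ennreal kappa) z)
        = (residual_op ^^ 0) (\<lambda>_. ennreal kappa) z + (\<Sum>j<N. (residual_op ^^ Suc j) (\<lambda>_. ennreal kappa) z)"
      by (rule sum.lessThan_Suc_shift)
    also have "\<dots> = ennreal kappa + residual_op (\<lambda>x. \<Sum>j<N. (residual_op ^^ j) (\<lambda>_. ennreal kappa) x) z"
      by (simp add: residual_op_sum)
    also have "\<dots> \<le> ennreal kappa + residual_op g z"
      using Suc.IH by (intro add_left_mono residual_op_mono) auto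
    finally show ?case
      using fixpoint[OF Suc.prems] by simp
  qed simp
  show ?thesis
    unfolding stationary_density_def suminf_eq_SUP using partial_sums[OF z] by (rule SUP_least)
qed

end

section \<open>Existence and uniqueness of the invariant distribution\<close>

lemma prob_space_eqI_le:
  assumes M: "prob_space M" and N: "prob_space N" and sets_eq: "sets M = sets N"
    and le: "\<And>A. A \<in> sets M \<Longrightarrow> emeasure M A \<le> emeasure N A"
  shows "M = N"
proof (rule measure_eqI[OF sets_eq])
  interpret M: prob_space M by (rule M)
  interpret N: prob_space N by (rule N)
  have space_eq: "space M = space N"
    using sets_eq_imp_space_eq[OF sets_eq] .
  fix A assume A: "A \<in> sets M"
  then have "space M - A \<in> sets M"
    by auto
  then have "measure M (space M - A) \<le> measure N (space M - A)"
    using le by (simp add: M.emeasure_eq_measure N.emeasure_eq_measure)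
  moreover have "measure M A \<le> measure N A"
    using le[OF A] by (simp add: M.emeasure_eq_measure N.emeasure_eq_measure)
  ultimately show "emeasure M A = emeasure N A"
    using A M.prob_compl[OF A] N.prob_compl[of A] sets_eq space_eq
    by (simp add: M.emeasure_eq_measure N.emeasure_eq_measure)
qed

context wrapped_cauchy_moebius
begin

lemma nn_integral_trans_kernel:
  assumes "AE x in \<mu>. x \<in> sphere 0 1" and [measurable]: "A \<in> sets borel"
  shows "(\<integral>\<^sup>+ x. emeasure (trans_kernel \<beta> \<phi> x) A \<partial>\<mu>)
       = (\<integral>\<^sup>+ x. (\<integral>\<^sup>+ z. transition_density x z * indicator A z \<partial>arc_measure) \<partial>\<mu>)"
  using assms(1) by (intro nn_integral_cong_AE) (auto elim!: eventually_mono simp: emeasure_trans_kernel)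

lemma emeasure_density_invariant:
  assumes [measurable]: "g \<in> borel_measurable borel" "A \<in> sets borel"
    and fixpoint: "\<And>z. z \<in> sphere 0 1 \<Longrightarrow> (\<integral>\<^sup>+ x. g x * transition_density x z \<partial>arc_measure) = g z"
  shows "emeasure (density arc_measure g) A
       = (\<integral>\<^sup>+ x. emeasure (trans_kernel \<beta> \<phi> x) A \<partial>density arc_measure g)"
proof -
  have "AE x in density arc_measure g. x \<in> sphere 0 1"
    using AE_arc_measure_sphere by (auto simp: AE_density elim!: eventually_mono)
  then have "(\<integral>\<^sup>+ x. emeasure (trans_kernel \<beta> \<phi> x) A \<partial>density arc_measure g)
      = (\<integral>\<^sup>+ x. g x * (\<integral>\<^sup>+ z. transition_density x z * indicator A z \<partial>arc_measure) \<partial>arc_measure)"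
    by (simp add: nn_integral_trans_kernel nn_integral_density)
  also have "\<dots> = (\<integral>\<^sup>+ x. (\<integral>\<^sup>+ z. g x * transition_density x z * indicator A z \<partial>arc_measure) \<partial>arc_measure)"
    by (intro nn_integral_cong) (simp add: nn_integral_cmult mult.assoc)
  also have "\<dots> = (\<integral>\<^sup>+ z. (\<integral>\<^sup>+ x. g x * transition_density x z * indicator A z \<partial>arc_measure) \<partial>arc_measure)"
    by (rule pair_sigma_finite.Fubini'[OF pair_sigma_finite_arc_measure, symmetric]) measurable
  also have "\<dots> = (\<integral>\<^sup>+ z. (\<integral>\<^sup>+ x. g x * transition_density x z \<partial>arc_measure) * indicator A z \<partial>arc_measure)"
    by (intro nn_integral_cong) (simp add: nn_integral_multc)
  also have "\<dots> = (\<integral>\<^sup>+ z. g z * indicator A z \<partial>arc_measure)"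
    using AE_arc_measure_sphere by (intro nn_integral_cong_AE) (auto elim!: eventually_mono simp: fixpoint)
  finally show ?thesis
    by (simp add: emeasure_density)
qed

lemma invariant_distr_stationary_density: "invariant_distr \<beta> \<phi> (density arc_measure stationary_density)"
proof -
  have "emeasure (density arc_measure stationary_density) (sphere 0 1) = (\<integral>\<^sup>+ z. stationary_density z \<partial>arc_measure)"
    using AE_arc_measure_sphere
    by (auto simp: emeasure_density intro!: nn_integral_cong_AE elim!: eventually_mono)
  moreover have "prob_space (density arc_measure stationary_density)"
    by (rule prob_spaceI) (simp add: emeasure_density nn_integral_stationary_density)
  ultimately show ?thesis
    unfolding invariant_distr_def
    by (auto simp: nn_integral_stationary_density stationary_density_fixpoint
        intro!: emeasure_density_invariant)
qed

lemma invariant_distr_AE_sphere: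
  assumes "invariant_distr \<beta> \<phi> \<mu>"
  shows "AE x in \<mu>. x \<in> sphere 0 1"
proof -
  interpret prob_space \<mu>
    using assms by (simp add: invariant_distr_def)
  show ?thesis
    using assms by (intro AE_prob_1) (auto simp: invariant_distr_def emeasure_eq_measure)
qed

lemma invariant_distr_eq_density:
  assumes inv: "invariant_distr \<beta> \<phi> \<mu>"
  shows "\<mu> = density arc_measure (\<lambda>z. \<integral>\<^sup>+ x. transition_density x z \<partial>\<mu>)"
proof -
  interpret prob_space \<mu>
    using inv by (simp add: invariant_distr_def)
  have sets_\<mu> [measurable_cong]: "sets \<mu> = sets borel"
    using inv by (simp add: invariant_distr_def)
  show ?thesis
  proof (rule measure_eqI)
    fix A assume "A \<in> sets \<mu>"
    then have [measurable]: "A \<in> sets borel"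
      using sets_\<mu> by simp
    have "emeasure \<mu> A = (\<integral>\<^sup>+ x. (\<integral>\<^sup>+ z. transition_density x z * indicator A z \<partial>arc_measure) \<partial>\<mu>)"
      using inv invariant_distr_AE_sphere[OF inv]
      by (simp add: invariant_distr_def nn_integral_trans_kernel)
    also have "\<dots> = (\<integral>\<^sup>+ z. (\<integral>\<^sup>+ x. transition_density x z * indicator A z \<partial>\<mu>) \<partial>arc_measure)"
      using sigma_finite_measure arc_measure.sigma_finite_measure
      by (intro pair_sigma_finite.Fubini'[symmetric]) (auto simp: pair_sigma_finite_def)
    also have "\<dots> = (\<integral>\<^sup>+ z. (\<integral>\<^sup>+ x. transition_density x z \<partial>\<mu>) * indicator A z \<partial>arc_measure)"
      by (intro nn_integral_cong) (simp add: nn_integral_multc)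
    finally show "emeasure \<mu> A = emeasure (density arc_measure (\<lambda>z. \<integral>\<^sup>+ x. transition_density x z \<partial>\<mu>)) A"
      by (subst emeasure_density) (auto intro!: sigma_finite_measure.borel_measurable_nn_integral)
  qed (simp add: sets_\<mu>)
qed

lemma invariant_distr_unique:
  assumes inv: "invariant_distr \<beta> \<phi> \<mu>"
  shows "\<mu> = density arc_measure stationary_density"
proof -
  interpret prob_space \<mu>
    using inv by (simp add: invariant_distr_def)
  have sets_\<mu> [measurable_cong]: "sets \<mu> = sets borel"
    using inv by (simp add: invariant_distr_def)
  define g where "g z = (\<integral>\<^sup>+ x. transition_density x z \<partial>\<mu>)" for z
  have [measurable]: "g \<in> borel_measurable borel"
    unfolding g_def by (rule borel_measurable_nn_integral) measurable
  have \<mu>: "\<mu> = density arc_measure g"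
    unfolding g_def by (rule invariant_distr_eq_density[OF inv])
  have "(\<integral>\<^sup>+ z. g z \<partial>arc_measure) = 1"
    using emeasure_space_1 sets_eq_imp_space_eq[OF sets_\<mu>] by (subst (asm) \<mu>) (simp add: emeasure_density)
  then have "g z = ennreal kappa + residual_op g z" if "z \<in> sphere 0 1" for z
    using nn_integral_transition_density_split[OF _ that, of g]
    by (subst (1) g_def, subst \<mu>) (simp add: nn_integral_density)
  then have "stationary_density z \<le> g z" if "z \<in> sphere 0 1" for z
    using that by (intro stationary_density_le_solution) auto
  then have "emeasure (density arc_measure stationary_density) A \<le> emeasure \<mu> A" if "A \<in> sets borel" for A
    using that AE_arc_measure_sphere
    by (subst \<mu>, simp add: emeasure_density)
       (auto intro!: nn_integral_mono_AE mult_right_mono elim!: eventually_mono)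
  then show ?thesis
    using invariant_distr_stationary_density inv
    by (intro prob_space_eqI_le[symmetric]) (auto simp: invariant_distr_def)
qed

end

section \<open>Probability of missing an arc\<close>

lemma (in prob_space) nn_integral_indep_var:
  assumes indep: "indep_var S Y T W" and [measurable]: "H \<in> borel_measurable (S \<Otimes>\<^sub>M T)"
  shows "(\<integral>\<^sup>+ \<omega>. H (Y \<omega>, W \<omega>) \<partial>M) = (\<integral>\<^sup>+ \<omega>. (\<integral>\<^sup>+ \<omega>'. H (Y \<omega>, W \<omega>') \<partial>M) \<partial>M)"
proof -
  have [measurable]: "Y \<in> measurable M S" "W \<in> measurable M T"
    and product: "distr M S Y \<Otimes>\<^sub>M distr M T W = distr M (S \<Otimes>\<^sub>M T) (\<lambda>\<omega>. (Y \<omega>, W \<omega>))"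
    using indep by (auto simp: indep_var_distribution_eq)
  interpret W: prob_space "distr M T W"
    by (rule prob_space_distr) simp
  have H_product [measurable]: "H \<in> borel_measurable (distr M S Y \<Otimes>\<^sub>M distr M T W)"
    by (simp cong: measurable_cong_sets)
  have "(\<integral>\<^sup>+ \<omega>. H (Y \<omega>, W \<omega>) \<partial>M) = integral\<^sup>N (distr M S Y \<Otimes>\<^sub>M distr M T W) H"
    by (simp add: product nn_integral_distr)
  also have "\<dots> = (\<integral>\<^sup>+ y. (\<integral>\<^sup>+ w. H (y, w) \<partial>distr M T W) \<partial>distr M S Y)"
    by (rule W.nn_integral_fst[symmetric]) simp
  also have "\<dots> = (\<integral>\<^sup>+ \<omega>. (\<integral>\<^sup>+ w. H (Y \<omega>, w) \<partial>distr M T W) \<partial>M)"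
    using W.borel_measurable_nn_integral_fst[OF H_product]
    by (subst nn_integral_distr) (simp_all cong: measurable_cong_sets)
  also have "\<dots> = (\<integral>\<^sup>+ \<omega>. (\<integral>\<^sup>+ \<omega>'. H (Y \<omega>, W \<omega>') \<partial>M) \<partial>M)"
    by (intro nn_integral_cong) (simp add: nn_integral_distr measurable_Pair2)
  finally show ?thesis .
qed

(* chain b (\<lambda>f. f 0) (\<lambda>i f. f i) is the chain driven by a fixed input sequence f:
   start f 0 and noise f i in step i. *)
lemma chain_restrict:
  "n \<le> N \<Longrightarrow> chain b (\<lambda>f. f 0) (\<lambda>i f. f i) n (restrict f {0..N}) = chain b (\<lambda>f. f 0) (\<lambda>i f. f i) n f"
  by (induction n) auto

lemma chain_measurable_PiM:
  "n \<le> N \<Longrightarrow> chain b (\<lambda>f. f 0) (\<lambda>i f. f i) n \<in> borel_measurable (PiM {0..N} (\<lambda>_. borel))"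
proof (induction n)
  case 0
  then show ?case
    by (simp add: measurable_component_singleton)
next
  case (Suc n)
  then have [measurable]: "chain b (\<lambda>f. f 0) (\<lambda>i f. f i) n \<in> borel_measurable (PiM {0..N} (\<lambda>_. borel))"
    "(\<lambda>f. f (Suc n)) \<in> borel_measurable (PiM {0..N} (\<lambda>_. borel))"
    by (auto intro: measurable_component_singleton)
  show ?case
    by simp
qed

locale wrapped_cauchy_moebius_chain = prob_space M
  for M :: "'a measure" +
  fixes \<beta> \<phi> :: real and X0 :: "'a \<Rightarrow> complex" and eps :: "nat \<Rightarrow> 'a \<Rightarrow> complex"
  assumes beta: "\<bar>\<beta>\<bar> < 1" and phi: "0 \<le> \<phi>" "\<phi> < 1"
    and X0_sphere: "\<forall>\<omega>\<in>space M. X0 \<omega> \<in> sphere 0 1"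
    and indep: "indep_vars (\<lambda>_. borel) (\<lambda>i. if i = 0 then X0 else eps i) UNIV"
    and eps_distr: "\<forall>i\<ge>1. distr M borel (eps i) = wrapped_cauchy \<phi>"
begin

definition inputs :: "nat \<Rightarrow> 'a \<Rightarrow> complex" where
  "inputs i = (if i = 0 then X0 else eps i)"

abbreviation no_visit :: "complex set \<Rightarrow> nat \<Rightarrow> 'a set" where
  "no_visit J n \<equiv> {\<omega> \<in> space M. \<forall>i\<in>{1..n}. chain \<beta> X0 eps i \<omega> \<notin> J}"

lemma inputs_measurable [measurable]: "inputs i \<in> borel_measurable M"
  using indep unfolding indep_vars_def inputs_def by auto

lemma eps_measurable [measurable]: "eps (Suc i) \<in> borel_measurable M"
  using inputs_measurable[of "Suc i"] by (simp add: inputs_def)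

(* That the wrapped Cauchy density integrates to 1 is read off from the law of the noise. *)
sublocale wrapped_cauchy_moebius \<beta> \<phi>
proof (rule wrapped_cauchy_moebius.intro)
  have "prob_space (distr M borel (eps (Suc 0)))"
    by (rule prob_space_distr) (rule eps_measurable)
  then show "prob_space (wrapped_cauchy \<phi>)"
    using eps_distr by simp
qed (fact beta phi)+

lemma chain_measurable [measurable]: "chain \<beta> X0 eps n \<in> borel_measurable M"
proof (induction n)
  case 0
  show ?case
    using inputs_measurable[of 0] by (simp add: inputs_def)
next
  case (Suc n)
  then have [measurable]: "chain \<beta> X0 eps n \<in> borel_measurable M" .
  show ?case
    by simp
qed

lemma chain_eq_inputs: "chain \<beta> X0 eps n \<omega> = chain \<beta> (\<lambda>f. f 0) (\<lambda>i f. f i) n (\<lambda>i. inputs i \<omega>)"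
  by (induction n) (simp_all add: inputs_def)

lemma AE_chain_sphere: "AE \<omega> in M. \<forall>n. chain \<beta> X0 eps n \<omega> \<in> sphere 0 1"
proof -
  have "AE \<omega> in M. eps (Suc i) \<omega> \<in> sphere 0 1" for i
  proof -
    have "AE w in wrapped_cauchy \<phi>. w \<in> sphere 0 1"
      using AE_arc_measure_sphere unfolding wrapped_cauchy_def
      by (subst AE_density) (auto elim!: eventually_mono)
    then show ?thesis
      using eps_distr by (subst (asm) eps_distr[rule_format, of "Suc i", symmetric]) (auto simp: AE_distr_iff)
  qed
  then have "AE \<omega> in M. \<forall>i. eps (Suc i) \<omega> \<in> sphere 0 1"
    by (simp add: AE_all_countable)
  with AE_space show ?thesis
  proof eventually_elim
    case (elim \<omega>)
    show ?case
    proof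
      show "chain \<beta> X0 eps n \<omega> \<in> sphere 0 1" for n
        using elim X0_sphere by (induction n) (auto simp: norm_mult norm_mob_sphere)
    qed
  qed
qed

definition past :: "nat \<Rightarrow> 'a \<Rightarrow> nat \<Rightarrow> complex" where
  "past n \<omega> = restrict (\<lambda>i. inputs i \<omega>) {0..n}"

lemma chain_eq_past:
  "i \<le> n \<Longrightarrow> chain \<beta> X0 eps i \<omega> = chain \<beta> (\<lambda>f. f 0) (\<lambda>i f. f i) i (past n \<omega>)"
  by (simp add: past_def chain_eq_inputs chain_restrict)

lemma nn_integral_past_eps_Suc:
  assumes [measurable]: "H \<in> borel_measurable (PiM {0..n} (\<lambda>_. borel) \<Otimes>\<^sub>M borel)"
  shows "(\<integral>\<^sup>+ \<omega>. H (past n \<omega>, eps (Suc n) \<omega>) \<partial>M)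
       = (\<integral>\<^sup>+ \<omega>. (\<integral>\<^sup>+ w. H (past n \<omega>, w) \<partial>wrapped_cauchy \<phi>) \<partial>M)"
proof -
  define next_input where "next_input \<omega> = restrict (\<lambda>i. inputs i \<omega>) {Suc n}" for \<omega>
  have indep_next: "indep_var (PiM {0..n} (\<lambda>_. borel)) (past n) (PiM {Suc n} (\<lambda>_. borel)) next_input"
    using indep_var_restrict[of "\<lambda>_. borel" inputs UNIV "{0..n}" "{Suc n}"] indep
    unfolding past_def[abs_def] next_input_def[abs_def] inputs_def[abs_def] by simp
  then have [measurable]: "past n \<in> measurable M (PiM {0..n} (\<lambda>_. borel))"
    by (rule indep_var_rv1)
  have [measurable]: "(\<lambda>f. f (Suc n)) \<in> borel_measurable (PiM {Suc n} (\<lambda>_. borel))"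
    by (rule measurable_component_singleton) simp
  have next_input: "next_input \<omega> (Suc n) = eps (Suc n) \<omega>" for \<omega>
    by (simp add: next_input_def inputs_def)
  have "(\<integral>\<^sup>+ \<omega>. H (past n \<omega>, eps (Suc n) \<omega>) \<partial>M)
      = (\<integral>\<^sup>+ \<omega>. (\<integral>\<^sup>+ \<omega>'. H (past n \<omega>, eps (Suc n) \<omega>') \<partial>M) \<partial>M)"
    using nn_integral_indep_var[OF indep_next, of "\<lambda>(y, f). H (y, f (Suc n))"] by (simp add: next_input)
  also have "\<dots> = (\<integral>\<^sup>+ \<omega>. (\<integral>\<^sup>+ w. H (past n \<omega>, w) \<partial>distr M borel (eps (Suc n))) \<partial>M)"
    by (intro nn_integral_cong) (simp add: nn_integral_distr measurable_Pair2)
  finally show ?thesis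
    using eps_distr by simp
qed

lemma emeasure_no_visit_Suc:
  assumes [measurable]: "J \<in> sets borel" and J: "J \<subseteq> sphere 0 1"
    and h: "h \<le> measure arc_measure J"
  shows "emeasure M (no_visit J (Suc n)) \<le> ennreal (1 - kappa * h) * emeasure M (no_visit J n)"
proof -
  define H :: "(nat \<Rightarrow> complex) \<times> complex \<Rightarrow> ennreal" where
    "H p = indicator {y. \<forall>i\<in>{1..n}. chain \<beta> (\<lambda>f. f 0) (\<lambda>i f. f i) i y \<notin> J} (fst p) *
      indicator (- J) (mob \<beta> (chain \<beta> (\<lambda>f. f 0) (\<lambda>i f. f i) n (fst p)) * snd p)" for p
  have [measurable]: "H \<in> borel_measurable (PiM {0..n} (\<lambda>_. borel) \<Otimes>\<^sub>M borel)"
  proof -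
    have [measurable]: "chain \<beta> (\<lambda>f. f 0) (\<lambda>i f. f i) i \<in> borel_measurable (PiM {0..n} (\<lambda>_. borel))"
      if "i \<le> n" for i
      using that by (rule chain_measurable_PiM)
    show ?thesis
      unfolding H_def by (measurable; auto intro: pred_intros_finite)
  qed
  have H: "H (past n \<omega>, w) = indicator (no_visit J n) \<omega> * indicator (- J) (mob \<beta> (chain \<beta> X0 eps n \<omega>) * w)"
    if "\<omega> \<in> space M" for \<omega> w
  proof -
    have "(\<forall>i\<in>{1..n}. chain \<beta> (\<lambda>f. f 0) (\<lambda>i f. f i) i (past n \<omega>) \<notin> J) \<longleftrightarrow> \<omega> \<in> no_visit J n"
      using that chain_eq_past[of _ n \<omega>] by auto
    then show ?thesis
      by (simp add: H_def chain_eq_past[of n n] split: split_indicator)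
  qed
  have "emeasure M (no_visit J (Suc n)) = (\<integral>\<^sup>+ \<omega>. indicator (no_visit J (Suc n)) \<omega> \<partial>M)"
    by (rule nn_integral_indicator[symmetric]) measurable
  also have "\<dots> = (\<integral>\<^sup>+ \<omega>. H (past n \<omega>, eps (Suc n) \<omega>) \<partial>M)"
    by (intro nn_integral_cong) (auto simp: H atLeastAtMostSuc_conv split: split_indicator)
  also have "\<dots> = (\<integral>\<^sup>+ \<omega>. indicator (no_visit J n) \<omega> * emeasure (trans_kernel \<beta> \<phi> (chain \<beta> X0 eps n \<omega>)) (- J) \<partial>M)"
    by (auto simp: nn_integral_past_eps_Suc H nn_integral_cmult emeasure_trans_kernel_eq_nn_integral
        intro!: nn_integral_cong)
  also have "\<dots> \<le> (\<integral>\<^sup>+ \<omega>. indicator (no_visit J n) \<omega> * ennreal (1 - kappa * h) \<partial>M)"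
    using AE_chain_sphere J h
    by (intro nn_integral_mono_AE) (auto intro!: mult_left_mono emeasure_trans_kernel_compl_le)
  also have "\<dots> = ennreal (1 - kappa * h) * emeasure M (no_visit J n)"
    by (simp add: nn_integral_cmult_indicator mult.commute)
  finally show ?thesis .
qed

lemma measure_no_visit_le:
  assumes [measurable]: "J \<in> sets borel" and J: "J \<subseteq> sphere 0 1"
    and h: "h \<le> measure arc_measure J"
  shows "measure M (no_visit J n) \<le> (1 - kappa * h) ^ n"
proof -
  have "h \<le> 2 * pi"
    using h arc_measure.bounded_measure[of J] measure_arc_measure_UNIV by simp
  then have "kappa * h \<le> 2 * pi * kappa"
    using kappa_pos by (simp add: mult.commute)
  then have step: "0 \<le> 1 - kappa * h"
    using two_pi_kappa_le_1 by linarith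
  have "emeasure M (no_visit J n) \<le> ennreal ((1 - kappa * h) ^ n)"
  proof (induction n)
    case 0
    show ?case
      using emeasure_space_1 by (simp add: emeasure_mono)
  next
    case (Suc n)
    have "emeasure M (no_visit J (Suc n)) \<le> ennreal (1 - kappa * h) * emeasure M (no_visit J n)"
      by (rule emeasure_no_visit_Suc[OF _ J h]) simp
    also have "\<dots> \<le> ennreal (1 - kappa * h) * ennreal ((1 - kappa * h) ^ n)"
      by (intro mult_left_mono Suc.IH) simp
    finally show ?case
      using step by (simp add: ennreal_mult[symmetric])
  qed
  then show ?thesis
    using step by (simp add: emeasure_eq_measure)
qed

end

section \<open>Hausdorff distance to the circle\<close>

lemma sphere_covered_by_arcs:
  fixes K :: nat
  assumes "1 \<le> K" "2 * pi / K \<le> \<epsilon>" and y: "y \<in> sphere (0::complex) 1"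
  obtains j where "j < K"
    "\<And>t. t \<in> {real j * (2 * pi / K) .. (real j + 1) * (2 * pi / K)} \<Longrightarrow> dist y (cis t) \<le> \<epsilon>"
proof -
  define h where "h = 2 * pi / K"
  have h: "0 < h" "real K * h = 2 * pi"
    using assms(1) by (auto simp: h_def)
  obtain s where s: "0 \<le> s" "s < 2 * pi" "y = cis s"
    using unit_circle_eq_cis[of y] y by auto
  define j where "j = nat \<lfloor>s / h\<rfloor>"
  have j: "real j * h \<le> s" "s < (real j + 1) * h"
    using s h floor_divide_lower[of h s] floor_divide_upper[of h s] by (auto simp: j_def)
  show ?thesis
  proof (rule that)
    have "real j * h < real K * h"
      using j(1) s(2) h(2) by linarith
    then show "j < K"
      using h(1) by simp
  next
    fix t assume "t \<in> {real j * (2 * pi / real K) .. (real j + 1) * (2 * pi / real K)}"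
    then have "real j * h \<le> t" "t \<le> real j * h + h"
      unfolding h_def[symmetric] by (simp_all add: distrib_right)
    then have "\<bar>s - t\<bar> \<le> h"
      using j by (simp add: distrib_right abs_le_iff)
    then show "dist y (cis t) \<le> \<epsilon>"
      using norm_cis_diff_le[of s t] assms(2) by (simp add: s dist_norm h_def)
  qed
qed

lemma infdist_le_finite_iff:
  fixes A :: "'a::heine_borel set"
  assumes "finite A" "A \<noteq> {}"
  shows "infdist y A \<le> e \<longleftrightarrow> (\<exists>a\<in>A. dist y a \<le> e)"
  using infdist_attains_inf[of A y] assms finite_imp_closed infdist_le2 by metis

(* Rational angles suffice on the right, which makes the event measurable. *)
lemma haus_dist_sphere_le_iff:
  fixes A :: "complex set"
  assumes "finite A" "A \<noteq> {}"
  shows "haus_dist A (sphere 0 1) \<le> e \<longleftrightarrow>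
    (\<forall>a\<in>A. infdist a (sphere 0 1) \<le> e) \<and> (\<forall>r::rat. \<exists>a\<in>A. dist (cis (of_rat r)) a \<le> e)"
proof -
  define S :: "complex set" where "S = sphere 0 1"
  have "S \<noteq> {}"
    using norm_cis[of 0] by (auto simp: S_def)
  obtain a0 where "a0 \<in> A"
    using assms(2) by auto
  have "bdd_above ((\<lambda>y. infdist y A) ` S)"
  proof (rule bdd_aboveI2)
    show "infdist y A \<le> 1 + norm a0" if "y \<in> S" for y
      using infdist_le[OF \<open>a0 \<in> A\<close>, of y] norm_triangle_ineq4[of y a0] that
      by (simp add: S_def dist_norm)
  qed
  then have "(SUP y\<in>S. infdist y A) \<le> e \<longleftrightarrow> (\<forall>y\<in>S. infdist y A \<le> e)"
    using \<open>S \<noteq> {}\<close> by (simp add: cSUP_le_iff)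
  also have "\<dots> \<longleftrightarrow> (\<forall>r::rat. infdist (cis (of_rat r)) A \<le> e)"
  proof
    assume "\<forall>r::rat. infdist (cis (of_rat r)) A \<le> e"
    then have "\<rat> \<subseteq> {t. infdist (cis t) A \<le> e}"
      by (auto simp: Rats_def)
    moreover have "closed {t. infdist (cis t) A \<le> e}"
      by (intro closed_Collect_le continuous_intros continuous_on_infdist)
    ultimately have "closure \<rat> \<subseteq> {t. infdist (cis t) A \<le> e}"
      by (rule closure_minimal)
    then have "infdist (cis t) A \<le> e" for t
      by (auto simp: Rats_closure_real)
    then show "\<forall>y\<in>S. infdist y A \<le> e"
      by (metis S_def mem_sphere_0 unit_circle_eq_cis)
  qed (auto simp: S_def)
  finally show ?thesis
    using assms \<open>S \<noteq> {}\<close>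
    by (auto simp: haus_dist_def S_def[symmetric] infdist_def cSUP_le_iff infdist_le_finite_iff[symmetric])
qed

lemma haus_dist_sphere_le:
  fixes A :: "complex set"
  assumes "finite A" "A \<subseteq> sphere 0 1" "0 \<le> e" and near: "\<And>y. y \<in> sphere 0 1 \<Longrightarrow> \<exists>a\<in>A. dist y a \<le> e"
  shows "haus_dist A (sphere 0 1) \<le> e"
proof -
  have "A \<noteq> {}"
    using near[of 1] by auto
  then show ?thesis
    using assms by (auto simp: haus_dist_sphere_le_iff subset_iff)
qed

lemma haus_dist_sphere_le_if_arcs_visited:
  fixes K :: nat and A :: "complex set"
  assumes K: "1 \<le> K" "2 * pi / K \<le> \<epsilon>" and A: "finite A" "A \<subseteq> sphere 0 1"
    and visited: "\<And>j. j < K \<Longrightarrow> A \<inter> cis ` {real j * (2 * pi / K) .. (real j + 1) * (2 * pi / K)} \<noteq> {}"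
  shows "haus_dist A (sphere 0 1) \<le> \<epsilon>"
proof (rule haus_dist_sphere_le[OF A])
  have "0 < 2 * pi / K"
    using K by simp
  then show "0 \<le> \<epsilon>"
    using K by linarith
  fix y :: complex assume "y \<in> sphere 0 1"
  then obtain j where "j < K"
    and near: "\<And>t. t \<in> {real j * (2 * pi / K) .. (real j + 1) * (2 * pi / K)} \<Longrightarrow> dist y (cis t) \<le> \<epsilon>"
    using sphere_covered_by_arcs[OF K] by blast
  with visited show "\<exists>a\<in>A. dist y a \<le> \<epsilon>"
    by fastforce
qed

lemma infdist_measurable [measurable]: "(\<lambda>x::complex. infdist x A) \<in> borel_measurable borel"
  by (intro borel_measurable_continuous_onI continuous_on_infdist continuous_intros)

context wrapped_cauchy_moebius_chain
begin

lemma haus_dist_event_measurable: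
  assumes "1 \<le> n"
  shows "{\<omega> \<in> space M. haus_dist ((\<lambda>i. chain \<beta> X0 eps i \<omega>) ` {1..n}) (sphere 0 1) \<le> e} \<in> sets M"
proof -
  have "{\<omega> \<in> space M. haus_dist ((\<lambda>i. chain \<beta> X0 eps i \<omega>) ` {1..n}) (sphere 0 1) \<le> e}
      = {\<omega> \<in> space M. (\<forall>i\<in>{1..n}. infdist (chain \<beta> X0 eps i \<omega>) (sphere 0 1) \<le> e) \<and>
          (\<forall>r::rat. \<exists>i\<in>{1..n}. dist (cis (of_rat r)) (chain \<beta> X0 eps i \<omega>) \<le> e)}"
    using assms by (subst haus_dist_sphere_le_iff) auto
  then show ?thesis
    by simp
qed

lemma measure_no_visit_arc_le:
  fixes K :: nat
  assumes "j < K"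
  defines "h \<equiv> 2 * pi / K"
  shows "measure M (no_visit (cis ` {real j * h .. (real j + 1) * h}) n) \<le> (1 - kappa * h) ^ n"
proof (rule measure_no_visit_le)
  have h: "0 < h" "real K * h = 2 * pi"
    using assms by (auto simp: h_def)
  have "(real j + 1) * h \<le> real K * h"
    using assms h by (intro mult_right_mono) auto
  then have "(real j + 1) * h - real j * h \<le> measure arc_measure (cis ` {real j * h .. (real j + 1) * h})"
    using h by (intro measure_arc_measure_cis_interval) auto
  then show "h \<le> measure arc_measure (cis ` {real j * h .. (real j + 1) * h})"
    by (simp add: algebra_simps)
qed auto

lemma prob_haus_dist_le_ge:
  fixes K :: nat
  assumes K: "1 \<le> K" "2 * pi / K \<le> \<epsilon>" and n: "1 \<le> n"
  shows "1 - K * (1 - kappa * (2 * pi / K)) ^ n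
    \<le> measure M {\<omega> \<in> space M. haus_dist ((\<lambda>i. chain \<beta> X0 eps i \<omega>) ` {1..n}) (sphere 0 1) \<le> \<epsilon>}"
    (is "_ \<le> measure M ?G")
proof -
  define h where "h = 2 * pi / K"
  define arc where "arc j = cis ` {real j * h .. (real j + 1) * h}" for j :: nat
  define U where "U = (\<Union>j<K. no_visit (arc j) n)"
  have [measurable]: "arc j \<in> sets borel" for j
    by (simp add: arc_def)
  have "measure M (no_visit (arc j) n) \<le> (1 - kappa * h) ^ n" if "j < K" for j
    using measure_no_visit_arc_le[OF that] by (simp add: arc_def h_def)
  then have "measure M U \<le> (\<Sum>j<K. (1 - kappa * h) ^ n)"
    unfolding U_def by (intro order_trans[OF measure_UNION_le] sum_mono) auto
  moreover have "AE \<omega> in M. \<omega> \<in> space M - U \<longrightarrow> \<omega> \<in> ?G"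
    using AE_chain_sphere
  proof eventually_elim
    case (elim \<omega>)
    show ?case
    proof
      assume \<omega>: "\<omega> \<in> space M - U"
      then have "(\<lambda>i. chain \<beta> X0 eps i \<omega>) ` {1..n} \<inter> arc j \<noteq> {}" if "j < K" for j
        using that unfolding U_def by blast
      then have "haus_dist ((\<lambda>i. chain \<beta> X0 eps i \<omega>) ` {1..n}) (sphere 0 1) \<le> \<epsilon>"
        using elim by (intro haus_dist_sphere_le_if_arcs_visited[OF K]) (auto simp: arc_def h_def)
      then show "\<omega> \<in> ?G"
        using \<omega> by simp
    qed
  qed
  then have "measure M (space M - U) \<le> measure M ?G"
    using haus_dist_event_measurable[OF n] by (intro finite_measure_mono_AE) auto
  moreover have "measure M (space M - U) = 1 - measure M U"
    by (rule prob_compl) (auto simp: U_def)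
  ultimately show ?thesis
    by (simp add: h_def)
qed

end

section \<open>Covering time\<close>

lemma nat_ceiling_arc_count:
  assumes "0 < \<epsilon>"
  defines "K \<equiv> nat \<lceil>2 * pi / \<epsilon>\<rceil>"
  shows "1 \<le> K" "2 * pi / K \<le> \<epsilon>" "K * \<epsilon> \<le> 2 * pi + \<epsilon>"
proof -
  have ceil: "2 * pi / \<epsilon> \<le> real K" "real K < 2 * pi / \<epsilon> + 1"
    using assms ceiling_correct[of "2 * pi / \<epsilon>"] by (auto simp: K_def)
  moreover have "0 < 2 * pi / \<epsilon>"
    using assms by simp
  ultimately show "1 \<le> K"
    by linarith
  have "2 * pi \<le> real K * \<epsilon>"
    using ceil(1) assms by (metis pos_divide_le_eq)
  then show "2 * pi / K \<le> \<epsilon>"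
    using \<open>1 \<le> K\<close> by (simp add: divide_le_eq mult.commute)
  have "real K * \<epsilon> < (2 * pi / \<epsilon> + 1) * \<epsilon>"
    using ceil(2) assms(1) by (rule mult_strict_right_mono)
  then show "K * \<epsilon> \<le> 2 * pi + \<epsilon>"
    using assms(1) by (simp add: distrib_right)
qed

lemma mult_power_one_minus_le:
  fixes x \<alpha> :: real and n K :: nat
  assumes "0 \<le> x" "x \<le> 1" "0 < \<alpha>" "1 \<le> K" and "ln (K / \<alpha>) \<le> x * n"
  shows "K * (1 - x) ^ n \<le> \<alpha>"
proof -
  have "(1 - x) ^ n \<le> exp (- x) ^ n"
    using assms by (intro power_mono exp_minus_ge) auto
  also have "\<dots> = exp (- (x * n))"
    by (simp add: exp_of_nat_mult[symmetric] mult.commute)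
  also have "\<dots> \<le> exp (- ln (K / \<alpha>))"
    using assms by simp
  also have "\<dots> = \<alpha> / K"
    using assms by (simp add: exp_minus)
  finally show ?thesis
    using assms by (simp add: le_divide_eq mult.commute)
qed

lemma arc_count_bounds:
  fixes \<kappa> v \<epsilon> :: real and K :: nat
  assumes \<kappa>: "0 < \<kappa>" "2 * pi * \<kappa> \<le> 1" and v: "0 < v" "v \<le> 4 * pi / 9"
    and \<epsilon>: "0 < \<epsilon>" "\<epsilon> < 1" and K: "1 \<le> K" "K * \<epsilon> \<le> 2 * pi + \<epsilon>"
  shows "real K \<le> 4 / (\<epsilon> * \<kappa> * v)" "v * \<epsilon> \<le> 2 * (2 * pi / K)"
proof -
  have "K * \<epsilon> \<le> 9"
    using K(2) \<epsilon> pi_less_4 by linarith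
  have "\<kappa> * v \<le> \<kappa> * (4 * pi / 9)"
    using \<kappa> v by (intro mult_left_mono) auto
  also have "\<dots> \<le> 2 / 9"
    using \<kappa>(2) by simp
  finally have "\<epsilon> * \<kappa> * v \<le> 2 * \<epsilon> / 9"
    using \<epsilon> by (simp add: mult.assoc)
  have "real K \<le> 9 / \<epsilon>"
    using \<open>K * \<epsilon> \<le> 9\<close> \<epsilon> by (simp add: le_divide_eq)
  also have "\<dots> \<le> 4 / (2 * \<epsilon> / 9)"
    using \<epsilon> by (simp add: divide_right_mono)
  also have "\<dots> \<le> 4 / (\<epsilon> * \<kappa> * v)"
    using \<kappa> v \<epsilon> \<open>\<epsilon> * \<kappa> * v \<le> 2 * \<epsilon> / 9\<close> by (intro divide_left_mono) auto
  finally show "real K \<le> 4 / (\<epsilon> * \<kappa> * v)" .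
  have "v * (real K * \<epsilon>) \<le> 4 * pi / 9 * 9"
    using v \<epsilon> \<open>K * \<epsilon> \<le> 9\<close> by (intro mult_mono) auto
  then show "v * \<epsilon> \<le> 2 * (2 * pi / K)"
    using K by (simp add: field_simps)
qed

lemma covering_time_bound:
  fixes \<kappa> v \<epsilon> \<alpha> :: real and n K :: nat
  assumes \<kappa>: "0 < \<kappa>" "2 * pi * \<kappa> \<le> 1" and v: "0 < v" "v \<le> 4 * pi / 9"
    and \<epsilon>: "0 < \<epsilon>" "\<epsilon> < 1" and \<alpha>: "0 < \<alpha>" "\<alpha> < 1"
    and K: "1 \<le> K" "K * \<epsilon> \<le> 2 * pi + \<epsilon>"
    and n: "2 / (\<kappa> * v * \<epsilon>) * (ln (1 / \<alpha>) + ln (4 / (\<epsilon> * \<kappa> * v))) \<le> real n"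
  shows "1 \<le> n" "K * (1 - \<kappa> * (2 * pi / K)) ^ n \<le> \<alpha>"
proof -
  define h where "h = 2 * pi / K"
  define L where "L = ln (1 / \<alpha>) + ln (4 / (\<epsilon> * \<kappa> * v))"
  have K_le: "real K \<le> 4 / (\<epsilon> * \<kappa> * v)" and "v * \<epsilon> \<le> 2 * h"
    using arc_count_bounds[OF assms(1-6) K] by (simp_all add: h_def)
  have "0 < h" "h \<le> 2 * pi"
    using K by (auto simp: h_def field_simps)
  then have "\<kappa> * h \<le> \<kappa> * (2 * pi)"
    using \<kappa> by (intro mult_left_mono) auto
  then have "\<kappa> * h \<le> 1"
    using \<kappa>(2) by (metis mult.commute order_trans)
  have "0 < ln (1 / \<alpha>)"
    using \<alpha> by simp
  have "0 \<le> ln K" "ln K \<le> ln (4 / (\<epsilon> * \<kappa> * v))"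
    using K K_le by (auto intro: ln_mono)
  then have "0 < L"
    using \<open>0 < ln (1 / \<alpha>)\<close> unfolding L_def by linarith
  have "ln (K / \<alpha>) = ln K + ln (1 / \<alpha>)"
    using K \<alpha> by (simp add: ln_div)
  then have "ln (K / \<alpha>) \<le> L"
    using \<open>ln K \<le> ln (4 / (\<epsilon> * \<kappa> * v))\<close> unfolding L_def by linarith
  have "L \<le> 2 * h / (v * \<epsilon>) * L"
    using \<open>0 < L\<close> \<open>v * \<epsilon> \<le> 2 * h\<close> v \<epsilon> by (simp add: le_divide_eq)
  also have "\<dots> = \<kappa> * h * (2 / (\<kappa> * v * \<epsilon>) * L)"
    using \<kappa> v \<epsilon> by (simp add: field_simps)
  also have "\<dots> \<le> \<kappa> * h * n"
    using n \<kappa> \<open>0 < h\<close> by (intro mult_left_mono) (auto simp: L_def)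
  finally have "L \<le> \<kappa> * h * n" .
  with \<open>0 < L\<close> show "1 \<le> n"
    by (cases n) auto
  show "K * (1 - \<kappa> * (2 * pi / K)) ^ n \<le> \<alpha>"
    using mult_power_one_minus_le[of "\<kappa> * h"] \<kappa> \<open>0 < h\<close> \<open>\<kappa> * h \<le> 1\<close> \<alpha> K
      \<open>ln (K / \<alpha>) \<le> L\<close> \<open>L \<le> \<kappa> * h * n\<close>
    by (simp add: h_def)
qed

lemma v_const_ge:
  assumes "pi \<le> \<epsilon>0"
  shows "ereal (pi / \<epsilon>0) \<le> v_const \<epsilon>0"
  unfolding v_const_def
proof (intro INF_greatest)
  fix u e assume u: "u \<in> sphere (0::complex) 1" and e: "e \<in> {0<..<\<epsilon>0}"
  have "pi / \<epsilon>0 \<le> min e pi / e"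
  proof (cases "e \<le> pi")
    case True
    then show ?thesis
      using e assms by (simp add: min_def divide_le_eq)
  next
    case False
    then show ?thesis
      using e by (simp add: min_def divide_left_mono)
  qed
  also have "\<dots> \<le> measure arc_measure (sphere 0 1 \<inter> cball u e) / e"
    using measure_arc_measure_cap_ge[OF u] e by (intro divide_right_mono) auto
  finally show "ereal (pi / \<epsilon>0) \<le> ereal (measure arc_measure (sphere 0 1 \<inter> cball u e) / e)"
    by simp
qed

lemma v_const_le:
  assumes "0 < \<epsilon>0"
  shows "v_const \<epsilon>0 \<le> ereal (4 * pi / \<epsilon>0)"
proof -
  have "v_const \<epsilon>0 \<le> ereal (measure arc_measure (sphere 0 1 \<inter> cball 1 (\<epsilon>0 / 2)) / (\<epsilon>0 / 2))"
    unfolding v_const_def using assms by (intro INF_lower2[of 1] INF_lower) auto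
  also have "\<dots> \<le> ereal (2 * pi / (\<epsilon>0 / 2))"
    using arc_measure.bounded_measure measure_arc_measure_UNIV assms
    by (auto intro!: divide_right_mono)
  finally show ?thesis
    by simp
qed

context wrapped_cauchy_moebius_chain
begin

lemma prob_haus_dist_le_of_time_bound:
  assumes v: "0 < v" "v \<le> 4 * pi / 9" and \<alpha>: "0 < \<alpha>" "\<alpha> < 1" and \<epsilon>: "0 < \<epsilon>" "\<epsilon> < 1"
    and n: "2 / (kappa * v * \<epsilon>) * (ln (1 / \<alpha>) + ln (4 / (\<epsilon> * kappa * v))) \<le> real n"
  shows "1 - \<alpha> \<le> measure M {\<omega> \<in> space M. haus_dist ((\<lambda>i. chain \<beta> X0 eps i \<omega>) ` {1..n}) (sphere 0 1) \<le> \<epsilon>}"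
proof -
  define K where "K = nat \<lceil>2 * pi / \<epsilon>\<rceil>"
  have K: "1 \<le> K" "2 * pi / K \<le> \<epsilon>" "K * \<epsilon> \<le> 2 * pi + \<epsilon>"
    using nat_ceiling_arc_count[OF \<epsilon>(1)] by (simp_all add: K_def)
  have "1 \<le> n" and bound: "K * (1 - kappa * (2 * pi / K)) ^ n \<le> \<alpha>"
    using covering_time_bound[OF kappa_pos two_pi_kappa_le_1 v \<epsilon> \<alpha> K(1,3) n] by simp_all
  then show ?thesis
    using prob_haus_dist_le_ge[OF K(1,2) \<open>1 \<le> n\<close>] by linarith
qed

(* Any \<epsilon>0 \<ge> pi keeps v_const \<epsilon>0 finite and positive; \<epsilon>0 = 9 also gives v \<le> 4 pi / 9,
   which covering_time_bound needs. *)
lemma covering_with_high_probability: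
  "\<exists>\<epsilon>0>0. 0 < v_const \<epsilon>0 \<and> v_const \<epsilon>0 < \<infinity> \<and>
     (\<forall>\<alpha>. 0 < \<alpha> \<and> \<alpha> < 1 \<longrightarrow> (\<exists>\<epsilon>1>0. \<forall>\<epsilon>. 0 < \<epsilon> \<and> \<epsilon> < \<epsilon>1 \<longrightarrow> (\<forall>n.
        2 / (kappa * real_of_ereal (v_const \<epsilon>0) * \<epsilon>) *
          (ln (1 / \<alpha>) + ln (4 / (\<epsilon> * kappa * real_of_ereal (v_const \<epsilon>0)))) \<le> real n \<longrightarrow>
        1 - \<alpha> \<le> measure M {\<omega> \<in> space M.
          haus_dist ((\<lambda>i. chain \<beta> X0 eps i \<omega>) ` {1..n}) (sphere 0 1) \<le> \<epsilon>})))"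
proof -
  obtain v where v: "v_const 9 = ereal v" "pi / 9 \<le> v" "v \<le> 4 * pi / 9"
    using v_const_ge[of 9] v_const_le[of 9] pi_less_4 by (cases "v_const 9") auto
  then have "0 < v"
    using pi_gt_zero by linarith
  then show ?thesis
    using prob_haus_dist_le_of_time_bound[OF _ v(3)] v(1)
    by (intro exI[of _ "9::real"] conjI allI impI exI[of _ "1::real"]) auto
qed

end

theorem proposition5p2:
  fixes \<beta> \<phi> :: real and M :: "'a measure" and X0 :: "'a \<Rightarrow> complex"
    and eps :: "nat \<Rightarrow> 'a \<Rightarrow> complex"
  assumes beta: "-1 < \<beta>" "\<beta> < 1"
    and phi: "0 \<le> \<phi>" "\<phi> < 1"
    and M: "prob_space M"
    and X0_circ: "\<forall>\<omega>\<in>space M. X0 \<omega> \<in> sphere 0 1"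
    and indep: "prob_space.indep_vars M (\<lambda>_. borel) (\<lambda>i. if i = 0 then X0 else eps i) UNIV"
    and eps_distr: "\<forall>i\<ge>1. distr M borel (eps i) = wrapped_cauchy \<phi>"
  shows "\<exists>\<mu>. invariant_distr \<beta> \<phi> \<mu> \<and> (\<forall>\<mu>'. invariant_distr \<beta> \<phi> \<mu>' \<longrightarrow> \<mu>' = \<mu>) \<and>
     (\<exists>\<epsilon>0>0. 0 < v_const \<epsilon>0 \<and> v_const \<epsilon>0 < \<infinity> \<and>
        (distr M borel X0 = \<mu> \<longrightarrow>
          (\<forall>\<alpha>. 0 < \<alpha> \<and> \<alpha> < 1 \<longrightarrow>
            (\<exists>\<epsilon>1>0. \<forall>\<epsilon>. 0 < \<epsilon> \<and> \<epsilon> < \<epsilon>1 \<longrightarrow>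
              (\<forall>n::nat.
                 let v = real_of_ereal (v_const \<epsilon>0);
                     \<kappa> = (1 / (2 * pi)) * ((1 - \<phi>) / (1 + \<phi>))
                 in real n \<ge> 2 / (\<kappa> * v * \<epsilon>) * (ln (1 / \<alpha>) + ln (4 / (\<epsilon> * \<kappa> * v))) \<longrightarrow>
                    measure M {\<omega> \<in> space M.
                       haus_dist ((\<lambda>i. chain \<beta> X0 eps i \<omega>) ` {1..n}) (sphere 0 1) \<le> \<epsilon>}
                      \<ge> 1 - \<alpha>)))))"
proof -
  have "\<bar>\<beta>\<bar> < 1"
    using beta by auto
  interpret wrapped_cauchy_moebius_chain M \<beta> \<phi> X0 eps
    by (intro wrapped_cauchy_moebius_chain.intro wrapped_cauchy_moebius_chain_axioms.intro)
      (fact M \<open>\<bar>\<beta>\<bar> < 1\<close> phi X0_circ indep eps_distr)+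
  show ?thesis
    using invariant_distr_stationary_density invariant_distr_unique covering_with_high_probability
    unfolding Let_def kappa_def[symmetric] by blast
qed

end
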